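(* For any graph $G$ of order $n$, $\gamma_{qtR}(G)\le n-\rho(G)(\delta(G)-2)$.
   Context: All graphs are finite, simple and undirected; $\delta(G)$ is the minimum degree. A set $B\subseteq V(G)$ is a packing if $N[u]\cap N[v]=\emptyset$ for all distinct $u,v\in B$; the packing number $\rho(G)$ is the maximum size of a packing. For $f:V(G)\to\{0,1,2\}$ write $V_i=\{v:f(v)=i\}$; weight $\omega(f)=|V_1|+2|V_2|$. A quasi-total Roman dominating function (QTRDF) is an $f$ such that every vertex labeled $0$ is adjacent to a vertex labeled $2$, and every vertex isolated in the subgraph induced by $V_1\cup V_2$ has label $1$; $\gamma_{qtR}(G)$ is the minimum weight of a QTRDF. *)

theory Defs
  imports Main
begin

definition graph :: "'a set \<Rightarrow> ('a \<Rightarrow> 'a \<Rightarrow> bool) \<Rightarrow> bool" where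
  "graph V E \<longleftrightarrow> finite V \<and> (\<forall>u v. E u v \<longrightarrow> u \<in> V \<and> v \<in> V)
     \<and> (\<forall>u v. E u v \<longrightarrow> E v u) \<and> (\<forall>v. \<not> E v v)"

definition open_nbhd :: "'a set \<Rightarrow> ('a \<Rightarrow> 'a \<Rightarrow> bool) \<Rightarrow> 'a \<Rightarrow> 'a set" where
  "open_nbhd V E v = {u \<in> V. E v u}"

definition closed_nbhd :: "'a set \<Rightarrow> ('a \<Rightarrow> 'a \<Rightarrow> bool) \<Rightarrow> 'a \<Rightarrow> 'a set" where
  "closed_nbhd V E v = insert v (open_nbhd V E v)"

definition degree :: "'a set \<Rightarrow> ('a \<Rightarrow> 'a \<Rightarrow> bool) \<Rightarrow> 'a \<Rightarrow> nat" where
  "degree V E v = card (open_nbhd V E v)"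

definition min_degree :: "'a set \<Rightarrow> ('a \<Rightarrow> 'a \<Rightarrow> bool) \<Rightarrow> nat" where
  "min_degree V E = Min (degree V E ` V)"

definition packing :: "'a set \<Rightarrow> ('a \<Rightarrow> 'a \<Rightarrow> bool) \<Rightarrow> 'a set \<Rightarrow> bool" where
  "packing V E B \<longleftrightarrow> B \<subseteq> V \<and>
     (\<forall>u\<in>B. \<forall>v\<in>B. u \<noteq> v \<longrightarrow> closed_nbhd V E u \<inter> closed_nbhd V E v = {})"

definition packing_number :: "'a set \<Rightarrow> ('a \<Rightarrow> 'a \<Rightarrow> bool) \<Rightarrow> nat" where
  "packing_number V E = Max {card B | B. packing V E B}"

definition qtrdf :: "'a set \<Rightarrow> ('a \<Rightarrow> 'a \<Rightarrow> bool) \<Rightarrow> ('a \<Rightarrow> nat) \<Rightarrow> bool" where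
  "qtrdf V E f \<longleftrightarrow>
     (\<forall>v\<in>V. f v \<le> 2)
   \<and> (\<forall>v\<in>V. f v = 0 \<longrightarrow> (\<exists>u\<in>V. E v u \<and> f u = 2))
   \<and> (\<forall>v\<in>V. f v \<noteq> 0 \<and> (\<forall>u\<in>V. E v u \<longrightarrow> f u = 0) \<longrightarrow> f v = 1)"

definition weight :: "'a set \<Rightarrow> ('a \<Rightarrow> nat) \<Rightarrow> nat" where
  "weight V f = (\<Sum>v\<in>V. f v)"

definition gamma_qtR :: "'a set \<Rightarrow> ('a \<Rightarrow> 'a \<Rightarrow> bool) \<Rightarrow> nat" where
  "gamma_qtR V E = Min {weight V f | f. qtrdf V E f}"

end

theory Submission
  imports Defs
begin

text \<open>Take a maximum packing \<open>B\<close> and give every \<open>v \<in> B\<close> a chosen neighbour \<open>w v\<close>. Label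
  \<open>B\<close> with 2, the chosen neighbours with 1, the remaining vertices of the closed
  neighbourhoods \<open>N[v]\<close> (\<open>v \<in> B\<close>) with 0 and everything else with 1. Since the \<open>N[v]\<close> are
  pairwise disjoint, this is a QTRDF of weight \<open>3\<close> on each \<open>N[v]\<close> and \<open>1\<close> on each vertex outside
  them, i.e. of weight \<open>n - (\<Sum>v\<in>B. deg v - 2) \<le> n - \<rho>(G) (\<delta>(G) - 2)\<close>.
  If \<open>\<delta>(G) = 0\<close> no neighbours can be chosen, but then the constant labelling 1 suffices.\<close>

lemma graphD:
  assumes "graph V E"
  shows "finite V" and "E u v \<Longrightarrow> u \<in> V" and "E u v \<Longrightarrow> v \<in> V"
    and "E u v \<Longrightarrow> E v u" and "\<not> E v v"
  using assms by (auto simp: graph_def)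

lemma finite_closed_nbhd: "finite V \<Longrightarrow> finite (closed_nbhd V E v)"
  by (simp add: closed_nbhd_def open_nbhd_def)

lemma card_closed_nbhd:
  assumes "graph V E"
  shows "card (closed_nbhd V E v) = degree V E v + 1"
proof -
  have "v \<notin> open_nbhd V E v" "finite (open_nbhd V E v)"
    using graphD[OF assms] by (auto simp: open_nbhd_def)
  then show ?thesis by (simp add: closed_nbhd_def degree_def)
qed

lemma min_degree_le_degree:
  "finite V \<Longrightarrow> v \<in> V \<Longrightarrow> min_degree V E \<le> degree V E v"
  unfolding min_degree_def by (intro Min_le) auto

lemma ex_neighbour_if_min_degree_pos:
  assumes "finite V" "v \<in> V" "min_degree V E > 0"
  shows "\<exists>u. E v u"
proof -
  have "card (open_nbhd V E v) > 0"
    using min_degree_le_degree[OF assms(1,2), of E] assms(3) by (simp add: degree_def)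
  then show ?thesis by (auto simp: open_nbhd_def card_gt_0_iff)
qed

lemma packing_number_attained:
  assumes "finite V"
  obtains B where "packing V E B" and "card B = packing_number V E"
proof -
  have "{card B | B. packing V E B} \<subseteq> card ` Pow V"
    unfolding packing_def by auto
  then have "finite {card B | B. packing V E B}"
    using assms finite_subset by blast
  moreover have "packing V E {}" by (simp add: packing_def)
  ultimately have "packing_number V E \<in> {card B | B. packing V E B}"
    unfolding packing_number_def by (intro Max_in) auto
  then show ?thesis using that by auto
qed

lemma gamma_qtR_le_weight:
  assumes "finite V" and "qtrdf V E f"
  shows "gamma_qtR V E \<le> weight V f"
proof -
  have "{weight V f | f. qtrdf V E f} \<subseteq> {..2 * card V}"
  proof
    fix x assume "x \<in> {weight V f | f. qtrdf V E f}"
    then obtain h where x: "x = weight V h" and h: "qtrdf V E h" by blast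
    have "weight V h \<le> (\<Sum>v\<in>V. 2)"
      unfolding weight_def using h by (intro sum_mono) (simp add: qtrdf_def)
    then show "x \<in> {..2 * card V}" using x by simp
  qed
  then have "finite {weight V f | f. qtrdf V E f}" using finite_subset by blast
  then show ?thesis unfolding gamma_qtR_def using assms(2) by (intro Min_le) auto
qed

lemma qtrdf_const_one: "qtrdf V E (\<lambda>_. 1)"
  by (simp add: qtrdf_def)

lemma weight_const_one: "weight V (\<lambda>_. 1) = card V"
  by (simp add: weight_def)

lemma packing_closed_nbhd_eq:
  assumes "packing V E B" "u \<in> B" "v \<in> B"
    and "x \<in> closed_nbhd V E u" "x \<in> closed_nbhd V E v"
  shows "u = v"
  using assms unfolding packing_def by blast

definition packing_function :: "('a \<Rightarrow> 'a \<Rightarrow> bool) \<Rightarrow> 'a set \<Rightarrow> ('a \<Rightarrow> 'a) \<Rightarrow> 'a \<Rightarrow> nat" where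
  "packing_function E B w x =
     (if x \<in> B then 2 else if x \<in> w ` B then 1 else if \<exists>v\<in>B. E v x then 0 else 1)"

locale packing_with_neighbours =
  fixes V :: "'a set" and E :: "'a \<Rightarrow> 'a \<Rightarrow> bool" and B :: "'a set" and w :: "'a \<Rightarrow> 'a"
  assumes graph: "graph V E"
    and packing: "packing V E B"
    and neighbour: "v \<in> B \<Longrightarrow> E v (w v)"
begin

abbreviation f where "f \<equiv> packing_function E B w"

lemma in_closed_nbhd: "E v x \<Longrightarrow> x \<in> closed_nbhd V E v"
  using graphD[OF graph] by (simp add: closed_nbhd_def open_nbhd_def)

lemma self_in_closed_nbhd: "E v x \<Longrightarrow> x \<in> closed_nbhd V E x"
  using graphD[OF graph] by (simp add: closed_nbhd_def)

lemma neighbour_of_packing_notin_packing: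
  assumes "v \<in> B" "E v x"
  shows "x \<notin> B"
proof
  assume "x \<in> B"
  then have "x = v"
    using packing_closed_nbhd_eq[OF packing _ assms(1)] in_closed_nbhd self_in_closed_nbhd assms(2)
    by blast
  then show False using assms(2) graphD(5)[OF graph] by blast
qed

lemma chosen_neighbour_unique:
  assumes "u \<in> B" "v \<in> B" "E v (w u)"
  shows "u = v"
  using packing_closed_nbhd_eq[OF packing assms(1,2)] in_closed_nbhd neighbour assms by blast

lemma packing_function_chosen_neighbour: "v \<in> B \<Longrightarrow> f (w v) = 1"
  using neighbour_of_packing_notin_packing neighbour by (auto simp: packing_function_def)

lemma packing_function_other_neighbour:
  assumes "v \<in> B" "E v x" "x \<noteq> w v"
  shows "f x = 0"
proof -
  have "x \<notin> w ` B" using chosen_neighbour_unique assms by blast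
  then show ?thesis
    using neighbour_of_packing_notin_packing assms by (auto simp: packing_function_def)
qed

lemma qtrdf_packing_function: "qtrdf V E f"
  unfolding qtrdf_def
proof (intro conjI ballI impI)
  fix x show "f x \<le> 2" by (simp add: packing_function_def)
next
  fix x assume "f x = 0"
  then obtain v where "v \<in> B" "E v x" by (auto simp: packing_function_def split: if_splits)
  then show "\<exists>u\<in>V. E x u \<and> f u = 2"
    using graphD[OF graph] by (intro bexI[of _ v]) (auto simp: packing_function_def)
next
  fix x assume x: "x \<in> V" "f x \<noteq> 0 \<and> (\<forall>u\<in>V. E x u \<longrightarrow> f u = 0)"
  show "f x = 1"
  proof (cases "x \<in> B")
    case True
    then show ?thesis
      using x packing_function_chosen_neighbour neighbour graphD(3)[OF graph] by force
  next
    case False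
    then show ?thesis using x by (auto simp: packing_function_def split: if_splits)
  qed
qed

lemma sum_packing_function_closed_nbhd:
  assumes v: "v \<in> B"
  shows "sum f (closed_nbhd V E v) = 3"
proof -
  have fin: "finite (open_nbhd V E v)" and vn: "v \<notin> open_nbhd V E v"
    using graphD[OF graph] by (auto simp: open_nbhd_def)
  have wv: "w v \<in> open_nbhd V E v"
    using neighbour[OF v] graphD(3)[OF graph] by (simp add: open_nbhd_def)
  have "sum f (closed_nbhd V E v) = f v + f (w v) + sum f (open_nbhd V E v - {w v})"
    using fin vn wv by (simp add: closed_nbhd_def sum.remove)
  also have "sum f (open_nbhd V E v - {w v}) = 0"
    using packing_function_other_neighbour[OF v] by (simp add: open_nbhd_def)
  finally show ?thesis
    using v packing_function_chosen_neighbour by (simp add: packing_function_def)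
qed

lemma weight_packing_function:
  "int (weight V f) = int (card V) - (\<Sum>v\<in>B. int (degree V E v) - 2)"
proof -
  define C where "C = (\<Union>v\<in>B. closed_nbhd V E v)"
  have finV: "finite V" using graphD(1)[OF graph] .
  have BV: "B \<subseteq> V" using packing by (simp add: packing_def)
  have CV: "C \<subseteq> V" using BV by (auto simp: C_def closed_nbhd_def open_nbhd_def)
  have finB: "finite B" using BV finV finite_subset by blast
  have disj: "\<forall>u\<in>B. \<forall>v\<in>B. u \<noteq> v \<longrightarrow> closed_nbhd V E u \<inter> closed_nbhd V E v = {}"
    using packing by (simp add: packing_def)
  have card_C: "card C = (\<Sum>v\<in>B. degree V E v + 1)"
    unfolding C_def using finB finV disj
    by (subst card_UN_disjoint) (auto simp: finite_closed_nbhd card_closed_nbhd[OF graph])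
  have sum_C: "sum f C = 3 * card B"
    unfolding C_def using finB finV disj
    by (subst sum.UNION_disjoint) (auto simp: finite_closed_nbhd sum_packing_function_closed_nbhd)
  have "f x = 1" if x: "x \<in> V - C" for x
  proof -
    have "v \<in> closed_nbhd V E v" for v by (simp add: closed_nbhd_def)
    then have "x \<notin> B" "x \<notin> w ` B" "\<not> (\<exists>v\<in>B. E v x)"
      using x in_closed_nbhd neighbour unfolding C_def by blast+
    then show ?thesis by (simp add: packing_function_def)
  qed
  then have sum_outside: "sum f (V - C) = card V - card C"
    using CV finV by (simp add: card_Diff_subset finite_subset)
  have "weight V f = sum f C + sum f (V - C)"
    unfolding weight_def using finV CV by (metis sum.subset_diff add.commute)
  moreover have "card C \<le> card V" using CV finV card_mono by blast
  moreover have "int (card C) = (\<Sum>v\<in>B. int (degree V E v) + 1)"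
    using card_C by (simp add: add.commute)
  moreover have "(\<Sum>v\<in>B. int (degree V E v) - 2) = (\<Sum>v\<in>B. int (degree V E v) + 1) - 3 * int (card B)"
    by (simp add: sum_subtractf sum.distrib)
  ultimately show ?thesis
    using sum_C sum_outside by (simp add: of_nat_diff)
qed

end

theorem mainTheorem8:
  fixes V :: "'a set" and E :: "'a \<Rightarrow> 'a \<Rightarrow> bool" and n :: nat
  assumes "graph V E" and "V \<noteq> {}" and "card V = n"
  shows "int (gamma_qtR V E)
           \<le> int n - int (packing_number V E) * (int (min_degree V E) - 2)"
proof -
  have finV: "finite V" using graphD(1)[OF assms(1)] .
  obtain B where B: "packing V E B" and card_B: "card B = packing_number V E"
    using packing_number_attained[OF finV] .
  show ?thesis
  proof (cases "min_degree V E = 0")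
    case True
    then show ?thesis
      using gamma_qtR_le_weight[OF finV qtrdf_const_one[of V E]] weight_const_one[of V] assms(3)
      by simp
  next
    case False
    have BV: "B \<subseteq> V" using B by (simp add: packing_def)
    obtain w where w: "\<forall>v\<in>B. E v (w v)"
      using ex_neighbour_if_min_degree_pos[OF finV] False BV by (metis bchoice subsetD gr0I)
    interpret packing_with_neighbours V E B w
      using assms(1) B w by unfold_locales auto
    have "(\<Sum>v\<in>B. int (min_degree V E) - 2) \<le> (\<Sum>v\<in>B. int (degree V E v) - 2)"
      using min_degree_le_degree[OF finV] BV by (intro sum_mono) force
    then show ?thesis
      using gamma_qtR_le_weight[OF finV qtrdf_packing_function] weight_packing_function
        assms(3) card_B by simp
  qed
qed

end
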